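(* Let $p\ge2$, $n,\ell,t$ be positive integers, $r\le n$ a nonnegative integer, $\xi$ a prime with $\xi>\max(t,r)$, and $\mathbf{a}=(a_1,\dots,a_t)\in\{0,1,\dots,\xi-1\}^t$. Then the code $\mathcal{C}_{p,t,\ell}(n,r,\mathbf{a},\xi)$ is $t$-zero-block-insertion-correcting with block length $\ell$.
   Context: $\mathbb{Z}_p=\{0,1,\dots,p-1\}$. Any $\mathbf{z}\in\mathbb{Z}_p^n$ of Hamming weight $r$ can be written uniquely as $\mathbf{z}=0^{b_1}u_10^{b_2}u_2\cdots u_r0^{b_{r+1}}$ with $u_i\in\mathbb{Z}_p\setminus\{0\}$ and $b_i\ge0$ (so $b_i$ is the number of zeros having exactly $i-1$ nonzero symbols to their left). Define $$\mathcal{C}_{p,t,\ell}(n,r,\mathbf{a},\xi)=\Bigl\{\mathbf{z}\in\mathbb{Z}_p^n:\ \mathrm{wt}_H(\mathbf{z})=r,\ \sum_{i=1}^{r+1}i^q\Bigl\lfloor\frac{b_i}{\ell}\Bigr\rfloor\equiv a_q\pmod{\xi}\text{ for all }1\le q\le t\Bigr\}.$$ A zero-block insertion of length $\ell$ transforms a word $\mathbf{u}\mathbf{w}$ into $\mathbf{u}0^\ell\mathbf{w}$ (for any split point). A code is $t$-zero-block-insertion-correcting (block length $\ell$) if for any two distinct codewords, the sets of words obtainable from them by at most $t$ successive zero-block insertions of length $\ell$ are disjoint. *)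

theory Defs
  imports "HOL-Computational_Algebra.Primes"
begin

definition wt_H :: "nat list \<Rightarrow> nat" where
  "wt_H z = length (filter (\<lambda>x. x \<noteq> 0) z)"

text \<open>b i z: number of zeros of z having exactly i-1 nonzero symbols to their left (i \<ge> 1).\<close>
definition zero_run :: "nat \<Rightarrow> nat list \<Rightarrow> nat" where
  "zero_run i z = card {j. j < length z \<and> z ! j = 0 \<and> wt_H (take j z) = i - 1}"

definition code_C :: "nat \<Rightarrow> nat \<Rightarrow> nat \<Rightarrow> nat \<Rightarrow> nat \<Rightarrow> (nat \<Rightarrow> nat) \<Rightarrow> nat \<Rightarrow> nat list set" where
  "code_C p t l n r a \<xi> = {z. length z = n \<and> set z \<subseteq> {0..<p} \<and> wt_H z = r \<and>
      (\<forall>q\<in>{1..t}. (\<Sum>i=1..r+1. i ^ q * (zero_run i z div l)) mod \<xi> = a q mod \<xi>)}"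

definition zero_block_ins :: "nat \<Rightarrow> (nat list \<times> nat list) set" where
  "zero_block_ins l = {(u @ w, u @ replicate l 0 @ w) | u w. True}"

definition ins_ball :: "nat \<Rightarrow> nat \<Rightarrow> nat list \<Rightarrow> nat list set" where
  "ins_ball l t x = {y. \<exists>k\<le>t. (x, y) \<in> zero_block_ins l ^^ k}"

definition zero_block_ins_correcting :: "nat \<Rightarrow> nat \<Rightarrow> nat list set \<Rightarrow> bool" where
  "zero_block_ins_correcting t l C \<longleftrightarrow>
     (\<forall>x\<in>C. \<forall>y\<in>C. x \<noteq> y \<longrightarrow> ins_ball l t x \<inter> ins_ball l t y = {})"

end

theory Submission
  imports Defs "HOL-Number_Theory.Cong"
begin

(* A word is determined by its sequence of nonzero symbols together with its gaps b_1, ..., b_{r+1},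
   and a zero-block insertion keeps the nonzero symbols and adds l to a single gap.  If codewords x
   and y both reach z, by k and k' insertions, then k = k' by length, and
   floor(b_i(x)/l) + m_x(i) = floor(b_i(y)/l) + m_y(i), where m_x(i) counts the insertions into gap i.
   The defining congruences of the code therefore make the power sums of the multisets m_x and m_y
   agree modulo xi in every degree q <= t.  As xi is a prime exceeding k, Newton's identities recover
   the elementary symmetric functions and hence the multisets modulo xi; their elements lie in
   {1, ..., r+1} with r < xi, so m_x = m_y.  Thus x and y have the same gaps, and x = y. *)

fun esym :: "nat \<Rightarrow> 'a::comm_semiring_1 list \<Rightarrow> 'a" where
  "esym 0 xs = 1"
| "esym (Suc j) [] = 0"
| "esym (Suc j) (x # xs) = esym (Suc j) xs + x * esym j xs"

definition power_sum :: "nat \<Rightarrow> 'a::comm_semiring_1 list \<Rightarrow> 'a" where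
  "power_sum q xs = (\<Sum>x\<leftarrow>xs. x ^ q)"

lemma power_sum_Nil [simp]: "power_sum q [] = 0"
  and power_sum_Cons [simp]: "power_sum q (x # xs) = x ^ q + power_sum q xs"
  by (simp_all add: power_sum_def)

lemma esym_Cons: "esym j (x # xs) = esym j xs + (if j = 0 then 0 else x * esym (j - 1) xs)"
  by (cases j) simp_all

lemma sum_alternating_esym_Cons:
  fixes x :: "'a::comm_ring_1"
  shows "(\<Sum>i\<le>m. (-1) ^ i * esym (m - i) (x # xs) * x ^ Suc i) = x * esym m xs"
proof (induction m)
  case 0
  then show ?case by simp
next
  case (Suc m)
  have "(\<Sum>i\<le>m. (-1) ^ Suc i * esym (m - i) (x # xs) * x ^ Suc (Suc i))
      = - x * (\<Sum>i\<le>m. (-1) ^ i * esym (m - i) (x # xs) * x ^ Suc i)"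
    by (simp add: sum_distrib_left algebra_simps)
  then have "(\<Sum>i\<le>m. (-1) ^ Suc i * esym (m - i) (x # xs) * x ^ Suc (Suc i)) = - x * (x * esym m xs)"
    by (simp only: Suc.IH)
  then show ?case
    by (subst sum.atMost_Suc_shift) (simp add: algebra_simps)
qed

theorem Newton_identity_esym:
  fixes xs :: "'a::comm_ring_1 list"
  shows "of_nat (Suc m) * esym (Suc m) xs = (\<Sum>i\<le>m. (-1) ^ i * esym (m - i) xs * power_sum (Suc i) xs)"
proof (induction xs arbitrary: m)
  case Nil
  then show ?case by simp
next
  case (Cons x xs)
  have middle: "(\<Sum>i\<le>m. (-1) ^ i * (if i = m then 0 else x * esym (m - Suc i) xs) * power_sum (Suc i) xs)
      = x * of_nat m * esym m xs"
  proof (cases m)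
    case (Suc n)
    then have "(\<Sum>i\<le>m. (-1) ^ i * (if i = m then 0 else x * esym (m - Suc i) xs) * power_sum (Suc i) xs)
        = x * (\<Sum>i\<le>n. (-1) ^ i * esym (n - i) xs * power_sum (Suc i) xs)"
      by (simp add: sum_distrib_left algebra_simps)
    then show ?thesis
      using Cons.IH[of n] Suc by (simp add: mult.assoc)
  qed simp
  have "(\<Sum>i\<le>m. (-1) ^ i * esym (m - i) (x # xs) * power_sum (Suc i) (x # xs))
      = (\<Sum>i\<le>m. (-1) ^ i * esym (m - i) xs * power_sum (Suc i) xs)
      + (\<Sum>i\<le>m. (-1) ^ i * (if i = m then 0 else x * esym (m - Suc i) xs) * power_sum (Suc i) xs)
      + (\<Sum>i\<le>m. (-1) ^ i * esym (m - i) (x # xs) * x ^ Suc i)"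
    by (auto simp: esym_Cons algebra_simps sum.distrib[symmetric] intro!: sum.cong simp del: esym.simps)
  then show ?case
    unfolding middle Cons.IH[symmetric] sum_alternating_esym_Cons by (simp add: algebra_simps)
qed

lemma esym_cong_if_power_sum_cong:
  fixes S T :: "int list" and m :: int
  assumes "prime m" "int K < m" "\<forall>q\<in>{1..K}. [power_sum q S = power_sum q T] (mod m)"
  shows "j \<le> K \<Longrightarrow> [esym j S = esym j T] (mod m)"
proof (induction j rule: less_induct)
  case (less j)
  show ?case
  proof (cases j)
    case (Suc n)
    have "[(\<Sum>i\<le>n. (-1) ^ i * esym (n - i) S * power_sum (Suc i) S)
         = (\<Sum>i\<le>n. (-1) ^ i * esym (n - i) T * power_sum (Suc i) T)] (mod m)"
      using less assms(3) Suc by (intro cong_sum cong_mult cong_refl) auto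
    then have "[of_nat (Suc n) * esym (Suc n) S = of_nat (Suc n) * esym (Suc n) T] (mod m)"
      by (simp only: Newton_identity_esym)
    moreover have "\<not> m dvd int (Suc n)"
      using less Suc assms(2) by (auto dest: zdvd_imp_le)
    then have "coprime (int (Suc n)) m"
      using assms(1) by (simp add: prime_imp_coprime coprime_commute)
    ultimately show ?thesis
      using Suc by (simp add: cong_mult_lcancel)
  qed simp
qed

lemma esym_eq_0_if_length_less: "length xs < j \<Longrightarrow> esym j xs = 0"
  by (induction j xs rule: esym.induct) auto

lemma esym_length: "esym (length xs) xs = prod_list xs"
  by (induction xs) (auto simp: esym_eq_0_if_length_less)

lemma power_sum_0: "power_sum 0 xs = of_nat (length xs)"
  by (induction xs) auto

lemma power_sum_shift:
  fixes c :: "'a::comm_ring_1"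
  shows "power_sum q (map (\<lambda>x. x - c) xs) = (\<Sum>i\<le>q. of_nat (q choose i) * (-c) ^ (q - i) * power_sum i xs)"
proof (induction xs)
  case (Cons x xs)
  have "(x - c) ^ q = (\<Sum>i\<le>q. of_nat (q choose i) * (-c) ^ (q - i) * x ^ i)"
    using binomial_ring[of x "-c" q] by (simp add: algebra_simps)
  with Cons show ?case
    by (simp add: sum.distrib algebra_simps)
qed simp

lemma power_sum_remove1: "s \<in> set xs \<Longrightarrow> power_sum q xs = s ^ q + power_sum q (remove1 s xs)"
  by (induction xs) (auto simp: add.left_commute)

(* Shifting by s makes the top elementary symmetric function of S vanish; the congruent
   power sums force the same for T modulo m, i.e. m divides the product of all b - s. *)
lemma cong_member_if_power_sum_cong:
  fixes S T :: "int list" and m :: int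
  assumes "prime m" "length S = length T" "int (length S) < m"
    and "\<forall>q\<in>{1..length S}. [power_sum q S = power_sum q T] (mod m)" and "s \<in> set S"
  shows "\<exists>b\<in>set T. [b = s] (mod m)"
proof -
  define K where "K = length S"
  have "[power_sum i S = power_sum i T] (mod m)" if "i \<le> K" for i
    using assms(2,4) that unfolding K_def
    by (cases "i = 0") (simp_all only: power_sum_0, auto)
  then have "\<forall>q\<in>{1..K}. [power_sum q (map (\<lambda>x. x - s) S) = power_sum q (map (\<lambda>x. x - s) T)] (mod m)"
    unfolding power_sum_shift by (auto intro!: cong_sum cong_mult)
  then have "[esym K (map (\<lambda>x. x - s) S) = esym K (map (\<lambda>x. x - s) T)] (mod m)"
    using esym_cong_if_power_sum_cong[OF assms(1)] assms(3) K_def by blast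
  moreover have "esym K (map (\<lambda>x. x - s) S) = 0"
    using esym_length[of "map (\<lambda>x. x - s) S"] assms(5) K_def by (simp add: prod_list_zero_iff)
  moreover have "esym K (map (\<lambda>x. x - s) T) = prod_list (map (\<lambda>x. x - s) T)"
    using esym_length[of "map (\<lambda>x. x - s) T"] K_def assms(2) by simp
  ultimately have "m dvd prod_list (map (\<lambda>x. x - s) T)"
    by (metis cong_0_iff cong_sym)
  then show ?thesis
    using assms(1) by (auto simp: prime_dvd_prod_mset_iff cong_iff_dvd_diff simp flip: prod_mset_prod_list)
qed

lemma mset_eq_if_power_sum_cong:
  fixes S T :: "int list" and m :: int
  assumes "prime m"
  shows "length S = length T \<Longrightarrow> int (length S) < m
    \<Longrightarrow> \<forall>q\<in>{1..length S}. [power_sum q S = power_sum q T] (mod m)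
    \<Longrightarrow> \<forall>a\<in>set S. \<forall>b\<in>set T. [a = b] (mod m) \<longrightarrow> a = b
    \<Longrightarrow> mset S = mset T"
proof (induction S arbitrary: T)
  case (Cons s S)
  have "s \<in> set T"
    using cong_member_if_power_sum_cong[OF assms Cons.prems(1-3), of s] Cons.prems(4)
    by (auto dest: cong_sym)
  have "mset S = mset (remove1 s T)"
  proof (rule Cons.IH)
    show "length S = length (remove1 s T)" and "int (length S) < m"
      using Cons.prems(1,2) \<open>s \<in> set T\<close> by (simp_all add: length_remove1)
    show "\<forall>q\<in>{1..length S}. [power_sum q S = power_sum q (remove1 s T)] (mod m)"
      using Cons.prems(3) power_sum_remove1[OF \<open>s \<in> set T\<close>] by (auto simp: cong_add_lcancel)
    show "\<forall>a\<in>set S. \<forall>b\<in>set (remove1 s T). [a = b] (mod m) \<longrightarrow> a = b"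
      using Cons.prems(4) by (meson list.set_intros(2) notin_set_remove1)
  qed
  with \<open>s \<in> set T\<close> show ?case by simp
qed simp

lemma power_sum_map_of_nat: "power_sum q (map of_nat xs) = of_nat (power_sum q xs)"
  by (induction xs) auto

corollary mset_eq_if_power_sum_cong_nat:
  fixes S T :: "nat list" and m :: nat
  assumes "prime m" "length S = length T" "length S < m"
    and "\<forall>q\<in>{1..length S}. [power_sum q S = power_sum q T] (mod m)"
    and "\<forall>a\<in>set S. \<forall>b\<in>set T. [a = b] (mod m) \<longrightarrow> a = b"
  shows "mset S = mset T"
proof -
  have "mset (map int S) = mset (map int T)"
    using assms by (intro mset_eq_if_power_sum_cong[of "int m"])
      (auto simp: power_sum_map_of_nat cong_int_iff prime_nat_int_transfer)
  then have "image_mset nat (mset (map int S)) = image_mset nat (mset (map int T))"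
    by simp
  then show ?thesis
    by (simp add: multiset.map_comp o_def)
qed

(* gap c z is the paper's b_{c+1}: the number of zeros preceded by exactly c nonzero symbols. *)
fun gap :: "nat \<Rightarrow> nat list \<Rightarrow> nat" where
  "gap c [] = 0"
| "gap 0 (v # z) = (if v = 0 then Suc (gap 0 z) else 0)"
| "gap (Suc c) (v # z) = gap (if v = 0 then Suc c else c) z"

lemma card_less_Suc_conv:
  "card {j. j < Suc n \<and> P j} = (if P 0 then 1 else 0) + card {j. j < n \<and> P (Suc j)}"
  using card_less_Suc[of "Collect P" n] card_less_Suc2[of "Collect P" n]
  by (auto simp: conj_commute)

lemma wt_H_Cons: "wt_H (v # z) = (if v = 0 then 0 else 1) + wt_H z"
  by (simp add: wt_H_def)

lemma zero_run_Suc_eq_gap: "zero_run (Suc c) z = gap c z"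
  unfolding zero_run_def diff_Suc_1
proof (induction z arbitrary: c)
  case (Cons v z)
  have "card {j. j < length (v # z) \<and> (v # z) ! j = 0 \<and> wt_H (take j (v # z)) = c}
      = (if v = 0 \<and> c = 0 then 1 else 0) + card {j. j < length z \<and> z ! j = 0 \<and> wt_H (v # take j z) = c}"
    by (simp add: card_less_Suc_conv wt_H_def)
  with Cons.IH show ?case
    by (cases c) (auto simp: wt_H_Cons)
qed simp

(* The decomposition 0^{b_1} u_1 0^{b_2} ... u_r 0^{b_{r+1}}, with g c standing for b_{c+1}. *)
fun word_of_gaps :: "nat list \<Rightarrow> (nat \<Rightarrow> nat) \<Rightarrow> nat list" where
  "word_of_gaps [] g = replicate (g 0) 0"
| "word_of_gaps (u # us) g = replicate (g 0) 0 @ u # word_of_gaps us (g \<circ> Suc)"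

lemma word_of_gaps_Suc_gap0:
  "word_of_gaps us (g(0 := Suc (g 0))) = 0 # word_of_gaps us g"
  by (cases us) (simp_all add: o_def)

lemma word_of_gaps_nonzeros_gap:
  "word_of_gaps (filter (\<lambda>v. v \<noteq> 0) z) (\<lambda>c. gap c z) = z"
proof (induction z)
  case (Cons v z)
  show ?case
  proof (cases "v = 0")
    case True
    then have "(\<lambda>c. gap c (v # z)) = (\<lambda>c. gap c z)(0 := Suc (gap 0 z))"
      by (auto simp: fun_eq_iff gr0_conv_Suc)
    with True Cons.IH show ?thesis
      by (simp add: word_of_gaps_Suc_gap0[of _ "\<lambda>c. gap c z"])
  next
    case False
    then have "(\<lambda>c. gap c (v # z)) \<circ> Suc = (\<lambda>c. gap c z)"
      by auto
    with False Cons.IH show ?thesis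
      by simp
  qed
qed simp

lemma eq_if_gap_eq_nonzeros_eq:
  assumes "\<And>c. gap c x = gap c y" "filter (\<lambda>v. v \<noteq> 0) x = filter (\<lambda>v. v \<noteq> 0) y"
  shows "x = y"
proof -
  have "word_of_gaps (filter (\<lambda>v. v \<noteq> 0) x) (\<lambda>c. gap c x) = word_of_gaps (filter (\<lambda>v. v \<noteq> 0) y) (\<lambda>c. gap c y)"
    using assms by simp
  then show ?thesis
    by (simp only: word_of_gaps_nonzeros_gap)
qed

lemma gap_replicate_zeros_append:
  "gap c (replicate l 0 @ w) = gap c w + (if c = 0 then l else 0)"
  by (cases c; induction l) auto

lemma gap_insert_zeros:
  "gap c (u @ replicate l 0 @ w) = gap c (u @ w) + (if c = wt_H u then l else 0)"
proof (induction u arbitrary: c)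
  case Nil
  then show ?case by (simp add: gap_replicate_zeros_append wt_H_def)
next
  case (Cons v u)
  then show ?case by (cases c) (auto simp: wt_H_Cons)
qed

lemma zero_block_insE:
  assumes "(x, y) \<in> zero_block_ins l"
  obtains u w where "x = u @ w" "y = u @ replicate l 0 @ w"
  using assms unfolding zero_block_ins_def by blast

lemma length_zero_block_ins_pow:
  "(x, y) \<in> zero_block_ins l ^^ k \<Longrightarrow> length y = length x + k * l"
proof (induction k arbitrary: y)
  case (Suc k)
  then obtain z u w where "(x, z) \<in> zero_block_ins l ^^ k" "z = u @ w" "y = u @ replicate l 0 @ w"
    by (auto elim!: zero_block_insE)
  with Suc.IH show ?case by fastforce
qed simp

lemma nonzeros_zero_block_ins_pow:
  "(x, y) \<in> zero_block_ins l ^^ k \<Longrightarrow> filter (\<lambda>v. v \<noteq> 0) y = filter (\<lambda>v. v \<noteq> 0) x"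
proof (induction k arbitrary: y)
  case (Suc k)
  then obtain z u w where "(x, z) \<in> zero_block_ins l ^^ k" "z = u @ w" "y = u @ replicate l 0 @ w"
    by (auto elim!: zero_block_insE)
  with Suc.IH show ?case by fastforce
qed simp

lemma gap_zero_block_ins_pow:
  assumes "(x, y) \<in> zero_block_ins l ^^ k"
  obtains L where "length L = k" "set L \<subseteq> {..wt_H x}" "\<And>c. gap c y = gap c x + l * count_list L c"
  using assms
proof (induction k arbitrary: y thesis)
  case 0
  then show ?case
    using "0.prems"(1)[of "[]"] by simp
next
  case (Suc k)
  then obtain z u w where z: "(x, z) \<in> zero_block_ins l ^^ k" and uw: "z = u @ w" "y = u @ replicate l 0 @ w"
    by (auto elim!: zero_block_insE)
  obtain L where L: "length L = k" "set L \<subseteq> {..wt_H x}" "\<And>c. gap c z = gap c x + l * count_list L c"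
    using Suc.IH[OF _ z] by blast
  have "wt_H u \<le> wt_H x"
    using nonzeros_zero_block_ins_pow[OF z] uw unfolding wt_H_def by (metis filter_append length_append le_add1)
  then show ?case
    using Suc.prems(1)[of "wt_H u # L"] L uw by (auto simp: gap_insert_zeros)
qed

lemma code_C_gap_sum_cong:
  assumes "x \<in> code_C p t l n r a \<xi>" "q \<in> {1..t}"
  shows "[(\<Sum>c\<le>r. Suc c ^ q * (gap c x div l)) = a q] (mod \<xi>)"
proof -
  have "(\<Sum>i=1..r+1. i ^ q * (zero_run i x div l)) mod \<xi> = a q mod \<xi>"
    using assms unfolding code_C_def by blast
  moreover have "(\<Sum>i=1..r+1. i ^ q * (zero_run i x div l)) = (\<Sum>c\<le>r. Suc c ^ q * (gap c x div l))"
    by (simp add: sum.atLeast_Suc_atMost_Suc_shift atLeast0AtMost zero_run_Suc_eq_gap del: sum.cl_ivl_Suc)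
  ultimately show ?thesis
    by (simp only: cong_def)
qed

lemma power_sum_cong_if_gap_div_count_eq:
  assumes "x \<in> code_C p t l n r a \<xi>" "y \<in> code_C p t l n r a \<xi>" "q \<in> {1..t}"
    and "set L1 \<subseteq> {..r}" "set L2 \<subseteq> {..r}"
    and "\<And>c. gap c x div l + count_list L1 c = gap c y div l + count_list L2 c"
  shows "[power_sum q (map Suc L1) = power_sum q (map Suc L2)] (mod \<xi>)"
proof -
  have "power_sum q (map Suc L) = (\<Sum>c\<le>r. Suc c ^ q * count_list L c)" if "set L \<subseteq> {..r}" for L
    using sum_list_map_eq_sum_count2[OF that, of "\<lambda>c. Suc c ^ q"]
    by (simp add: power_sum_def o_def mult.commute)
  then have "(\<Sum>c\<le>r. Suc c ^ q * (gap c x div l)) + power_sum q (map Suc L1)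
      = (\<Sum>c\<le>r. Suc c ^ q * (gap c y div l)) + power_sum q (map Suc L2)"
      (is "?X + _ = ?Y + _")
    using assms(4-6) by (simp add: sum.distrib[symmetric] distrib_left[symmetric])
  moreover have "[?Y = ?X] (mod \<xi>)"
    using code_C_gap_sum_cong[OF assms(1,3)] code_C_gap_sum_cong[OF assms(2,3)]
    by (simp add: cong_def)
  ultimately have "[?X + power_sum q (map Suc L1) = ?X + power_sum q (map Suc L2)] (mod \<xi>)"
    by (simp add: cong_add_rcancel_nat)
  then show ?thesis
    by (simp add: cong_add_lcancel_nat)
qed

lemma mset_eq_if_gap_div_count_eq:
  assumes "prime \<xi>" "max t r < \<xi>"
    and "x \<in> code_C p t l n r a \<xi>" "y \<in> code_C p t l n r a \<xi>"
    and "length L1 = length L2" "length L1 \<le> t" "set L1 \<subseteq> {..r}" "set L2 \<subseteq> {..r}"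
    and "\<And>c. gap c x div l + count_list L1 c = gap c y div l + count_list L2 c"
  shows "mset L1 = mset L2"
proof -
  have "mset (map Suc L1) = mset (map Suc L2)"
  proof (rule mset_eq_if_power_sum_cong_nat[OF assms(1)])
    show "length (map Suc L1) = length (map Suc L2)" and "length (map Suc L1) < \<xi>"
      using assms(2,5,6) by simp_all
    show "\<forall>q\<in>{1..length (map Suc L1)}. [power_sum q (map Suc L1) = power_sum q (map Suc L2)] (mod \<xi>)"
      using power_sum_cong_if_gap_div_count_eq[OF assms(3,4) _ assms(7-9)] assms(6) by simp
    show "\<forall>a\<in>set (map Suc L1). \<forall>b\<in>set (map Suc L2). [a = b] (mod \<xi>) \<longrightarrow> a = b"
      using assms(2,7,8)
      by (auto simp: cong_add_rcancel_nat[of _ 1, simplified])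
        (meson atMost_iff cong_less_modulus_unique_nat le_less_trans subsetD)
  qed
  then show ?thesis
    by (simp add: mset_map inj_eq[OF multiset.inj_map[OF inj_Suc]])
qed

lemma code_C_eq_if_common_descendant:
  assumes "prime \<xi>" "max t r < \<xi>" "0 < l"
    and "x \<in> code_C p t l n r a \<xi>" "y \<in> code_C p t l n r a \<xi>"
    and "(x, z) \<in> zero_block_ins l ^^ k" "(y, z) \<in> zero_block_ins l ^^ k'" "k \<le> t"
  shows "x = y"
proof -
  have x: "wt_H x = r" "length x = n" and y: "wt_H y = r" "length y = n"
    using assms(4,5) by (simp_all add: code_C_def)
  obtain L1 where L1: "length L1 = k" "set L1 \<subseteq> {..r}" "\<And>c. gap c z = gap c x + l * count_list L1 c"
    using gap_zero_block_ins_pow[OF assms(6)] x(1) by blast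
  obtain L2 where L2: "length L2 = k'" "set L2 \<subseteq> {..r}" "\<And>c. gap c z = gap c y + l * count_list L2 c"
    using gap_zero_block_ins_pow[OF assms(7)] y(1) by blast
  have "k' = k"
    using length_zero_block_ins_pow[OF assms(6)] length_zero_block_ins_pow[OF assms(7)] x(2) y(2) assms(3)
    by simp
  have gap_div: "gap c x div l + count_list L1 c = gap c y div l + count_list L2 c" for c
  proof -
    have "(gap c x + l * count_list L1 c) div l = (gap c y + l * count_list L2 c) div l"
      by (simp only: L1(3)[symmetric] L2(3)[symmetric])
    with assms(3) show ?thesis
      by simp
  qed
  then have "mset L1 = mset L2"
    using mset_eq_if_gap_div_count_eq[OF assms(1,2,4,5) _ _ L1(2) L2(2)] L1(1) L2(1) \<open>k' = k\<close> assms(8)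
    by simp
  then have "gap c x = gap c y" for c
    using gap_div[of c] L1(3) L2(3) by (metis count_mset add_right_cancel)
  moreover have "filter (\<lambda>v. v \<noteq> 0) x = filter (\<lambda>v. v \<noteq> 0) y"
    using nonzeros_zero_block_ins_pow[OF assms(6)] nonzeros_zero_block_ins_pow[OF assms(7)] by simp
  ultimately show "x = y"
    by (rule eq_if_gap_eq_nonzeros_eq)
qed

theorem lemma4:
  fixes p n l t r \<xi> :: nat and a :: "nat \<Rightarrow> nat"
  assumes "p \<ge> 2" "n > 0" "l > 0" "t > 0" "r \<le> n"
    and "prime \<xi>" "\<xi> > max t r"
    and "\<forall>q\<in>{1..t}. a q < \<xi>"
  shows "zero_block_ins_correcting t l (code_C p t l n r a \<xi>)"
  unfolding zero_block_ins_correcting_def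
proof (intro ballI impI equals0I)
  fix x y z
  assume "x \<in> code_C p t l n r a \<xi>" "y \<in> code_C p t l n r a \<xi>" "x \<noteq> y"
    and "z \<in> ins_ball l t x \<inter> ins_ball l t y"
  moreover obtain k k' where "k \<le> t" "(x, z) \<in> zero_block_ins l ^^ k" "(y, z) \<in> zero_block_ins l ^^ k'"
    using \<open>z \<in> ins_ball l t x \<inter> ins_ball l t y\<close> unfolding ins_ball_def by blast
  ultimately show False
    using code_C_eq_if_common_descendant[OF assms(6,7,3)] by blast
qed

end
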